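(* For every $j\in\mathsf{R}\setminus\mathsf{R}'$ it holds: $\mathrm{Lroot}(j-1)=\mathrm{Lroot}(j)$, $\mathrm{end}(j-1)=\mathrm{end}(j)$, $\mathrm{Ltail}(j-1)=\mathrm{Ltail}(j)$, $\mathrm{efull}(j-1)=\mathrm{efull}(j)$, and $\mathrm{type}(j-1)=\mathrm{type}(j)$.
   Context: $T\in[0\mathinner{.\,.}\sigma)^n$ with $2\le\sigma<n^{1/7}$; $\tau=\lfloor\mu\log_\sigma n\rfloor$ for a fixed positive constant $\mu<1/6$ with $\tau\ge1$. $\mathrm{per}(S)$ is the shortest period of $S$. $\mathsf{R}=\{i\in[1\mathinner{.\,.}n-3\tau+2]:\mathrm{per}(T[i\mathinner{.\,.}i+3\tau-2])\le\tau/3\}$ and $\mathsf{R}'=\{j\in\mathsf{R}:j-1\notin\mathsf{R}\}$. For $j\in\mathsf{R}$: $\mathrm{end}(j)=\min\{j'\ge j:j'\notin\mathsf{R}\}+3\tau-2$; with $p=\mathrm{per}(T[j\mathinner{.\,.}j+3\tau-1))$, $\mathrm{Lroot}(j)=\min\{T[j+t\mathinner{.\,.}j+t+p):t\in[0\mathinner{.\,.}p)\}$ (lexicographic minimum); with $H=\mathrm{Lroot}(j)$, $T[j\mathinner{.\,.}\mathrm{end}(j))$ is uniquely written as $H'H^kH''$ with $H'$ a proper suffix and $H''$ a proper prefix of $H$, and $\mathrm{Ltail}(j)=|H''|$; $\mathrm{efull}(j)=\mathrm{end}(j)-\mathrm{Ltail}(j)$; $\mathrm{type}(j)=+1$ if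 $\mathrm{end}(j)\le n$ and $T[\mathrm{end}(j)]\succ T[\mathrm{end}(j)-|H|]$, and $\mathrm{type}(j)=-1$ otherwise. *)

theory Defs
  imports Complex_Main "HOL-Library.List_Lexorder" "HOL-Library.Sublist"
begin

text \<open>Texts are lists; positions are 1-based as in the paper: T[i] = T ! (i-1).
  sub T i j is the fragment T[i..j) (half-open, 1-based).\<close>

definition chr :: "nat list \<Rightarrow> nat \<Rightarrow> nat" where
  "chr T i = T ! (i - 1)"

definition sub :: "nat list \<Rightarrow> nat \<Rightarrow> nat \<Rightarrow> nat list" where
  "sub T i j = take (j - i) (drop (i - 1) T)"

definition per :: "nat list \<Rightarrow> nat" where
  "per S = (LEAST p. 0 < p \<and> (\<forall>k. k + p < length S \<longrightarrow> S ! k = S ! (k + p)))"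

definition Rset :: "nat list \<Rightarrow> nat \<Rightarrow> nat set" where
  "Rset T \<tau> = {i. 1 \<le> i \<and> i + 3 * \<tau> \<le> length T + 2 \<and>
      real (per (sub T i (i + 3 * \<tau> - 1))) \<le> real \<tau> / 3}"

definition Rprime :: "nat list \<Rightarrow> nat \<Rightarrow> nat set" where
  "Rprime T \<tau> = {j \<in> Rset T \<tau>. j - 1 \<notin> Rset T \<tau>}"

definition run_end :: "nat list \<Rightarrow> nat \<Rightarrow> nat \<Rightarrow> nat" where
  "run_end T \<tau> j = (LEAST j'. j \<le> j' \<and> j' \<notin> Rset T \<tau>) + 3 * \<tau> - 2"

definition Lroot :: "nat list \<Rightarrow> nat \<Rightarrow> nat \<Rightarrow> nat list" where
  "Lroot T \<tau> j = (let p = per (sub T j (j + 3 * \<tau> - 1))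
     in Min {sub T (j + t) (j + t + p) | t. t < p})"

definition Ltail :: "nat list \<Rightarrow> nat \<Rightarrow> nat \<Rightarrow> nat" where
  "Ltail T \<tau> j = (THE l. \<exists>H' k H''.
      sub T j (run_end T \<tau> j) = H' @ concat (replicate k (Lroot T \<tau> j)) @ H'' \<and>
      strict_suffix H' (Lroot T \<tau> j) \<and> strict_prefix H'' (Lroot T \<tau> j) \<and>
      l = length H'')"

definition efull :: "nat list \<Rightarrow> nat \<Rightarrow> nat \<Rightarrow> nat" where
  "efull T \<tau> j = run_end T \<tau> j - Ltail T \<tau> j"

definition rtype :: "nat list \<Rightarrow> nat \<Rightarrow> nat \<Rightarrow> int" where
  "rtype T \<tau> j = (if run_end T \<tau> j \<le> length T \<and>
        chr T (run_end T \<tau> j) > chr T (run_end T \<tau> j - length (Lroot T \<tau> j))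
      then 1 else -1)"

end

theory Submission
  imports Defs
begin

text \<open>Positions \<open>j - 1\<close> and \<open>j\<close> lie in the same run of \<open>R\<close>, so they have the same end.
  Every window of length \<open>3\<tau> - 1\<close> in the run has a period of at most \<open>\<tau>/3\<close>, and two
  consecutive windows overlap in all but one symbol, so by the weak Fine--Wilf lemma they have
  the same shortest period \<open>p\<close>; the windows then glue to show that the whole fragment
  \<open>T[j-1..end)\<close> has shortest period \<open>p\<close>. The length-\<open>p\<close> factors starting in
  \<open>[j-1..j+p-1)\<close> and in \<open>[j..j+p)\<close> are the same set of rotations, so their minima \<open>Lroot\<close> agree.
  Because \<open>p\<close> is the shortest period, these rotations are pairwise distinct, which makes the
  decomposition \<open>H' H\<^sup>k H''\<close> unique with \<open>|H''|\<close> determined by the offset of a copy of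
  \<open>H\<close> modulo \<open>p\<close>; removing the first symbol shifts both the start and that offset by one,
  so the tail is unchanged. The remaining quantities are functions of these three.\<close>

section \<open>Periods of lists\<close>

definition has_period :: "'a list \<Rightarrow> nat \<Rightarrow> bool" where
  "has_period x p \<longleftrightarrow> (\<forall>k. k + p < length x \<longrightarrow> x ! k = x ! (k + p))"

lemma per_eq_Least_has_period: "per x = (LEAST p. 0 < p \<and> has_period x p)"
  by (simp add: per_def has_period_def)

lemma has_periodD: "has_period x p \<Longrightarrow> k + p < length x \<Longrightarrow> x ! k = x ! (k + p)"
  by (simp add: has_period_def)

lemma has_period_Suc_length: "has_period x (Suc (length x))"
  by (simp add: has_period_def)

lemma per_pos_has_period: "0 < per x \<and> has_period x (per x)"
  unfolding per_eq_Least_has_period by (rule LeastI[of _ "Suc (length x)"]) (simp add: has_period_Suc_length)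

lemma per_pos: "0 < per x"
  using per_pos_has_period by blast

lemma has_period_per: "has_period x (per x)"
  using per_pos_has_period by blast

lemma per_le: "0 < d \<Longrightarrow> has_period x d \<Longrightarrow> per x \<le> d"
  unfolding per_eq_Least_has_period by (rule Least_le) simp

lemma has_period_nth_mod: "has_period x p \<Longrightarrow> i < length x \<Longrightarrow> x ! i = x ! (i mod p)"
proof (induction i rule: less_induct)
  case (less i)
  show ?case
  proof (cases "p \<le> i \<and> 0 < p")
    case True
    then have "x ! (i - p) = x ! i"
      using less.prems unfolding has_period_def by (metis le_add_diff_inverse2)
    moreover have "x ! (i - p) = x ! ((i - p) mod p)"
      using True less by simp
    ultimately show ?thesis using True by (simp add: le_mod_geq)
  qed auto
qed

lemma has_period_nth_cong:
  "has_period x p \<Longrightarrow> i < length x \<Longrightarrow> i' < length x \<Longrightarrow> i mod p = i' mod p \<Longrightarrow> x ! i = x ! i'"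
  using has_period_nth_mod[of x p i] has_period_nth_mod[of x p i'] by simp

lemma has_period_drop: "has_period x p \<Longrightarrow> has_period (drop m x) p"
  unfolding has_period_def by (auto simp: add.assoc)

lemma has_period_take: "has_period x p \<Longrightarrow> has_period (take m x) p"
  unfolding has_period_def by auto

lemma has_period_tl: "has_period x p \<Longrightarrow> has_period (tl x) p"
  using has_period_drop[of x p 1] by (simp add: drop_Suc)

lemma take_drop_mod_period:
  assumes "has_period x p" "t + m \<le> length x"
  shows "take m (drop t x) = take m (drop (t mod p) x)"
proof (rule nth_equalityI)
  have "t mod p + m \<le> length x" using assms(2) mod_less_eq_dividend[of t p] by linarith
  then show "length (take m (drop t x)) = length (take m (drop (t mod p) x))"
    using assms(2) by simp
  fix i assume "i < length (take m (drop t x))"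
  then have "i < m" "t + i < length x" "t mod p + i < length x"
    using assms(2) \<open>t mod p + m \<le> length x\<close> by auto
  moreover have "(t + i) mod p = (t mod p + i) mod p" by (simp add: mod_add_left_eq)
  ultimately have "x ! (t + i) = x ! (t mod p + i)"
    using has_period_nth_cong[OF assms(1)] by blast
  then show "take m (drop t x) ! i = take m (drop (t mod p) x) ! i"
    using \<open>i < m\<close> \<open>t + i < length x\<close> \<open>t mod p + i < length x\<close> by simp
qed

lemma fine_wilf_step:
  assumes p: "has_period x p" and q: "has_period x q" and "p < q" "p + q \<le> length x"
  shows "has_period x (q - p)"
  unfolding has_period_def
proof (intro allI impI)
  fix i assume i: "i + (q - p) < length x"
  show "x ! i = x ! (i + (q - p))"
  proof (cases "p \<le> i")
    case True
    have "x ! (i - p) = x ! (i - p + p)"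
      by (rule has_periodD[OF p]) (use True i in simp)
    moreover have "x ! (i - p) = x ! (i - p + q)"
      by (rule has_periodD[OF q]) (use True i \<open>p < q\<close> in simp)
    moreover have "i - p + p = i" "i - p + q = i + (q - p)" using True \<open>p < q\<close> by auto
    ultimately show ?thesis by metis
  next
    case False
    have "x ! i = x ! (i + q)"
      by (rule has_periodD[OF q]) (use False \<open>p + q \<le> length x\<close> in simp)
    moreover have "x ! (i + (q - p)) = x ! (i + (q - p) + p)"
      by (rule has_periodD[OF p]) (use False \<open>p < q\<close> \<open>p + q \<le> length x\<close> in simp)
    moreover have "i + (q - p) + p = i + q" using \<open>p < q\<close> by simp
    ultimately show ?thesis by metis
  qed
qed

text \<open>Weak Fine--Wilf: subtracting the smaller period keeps the sum of the periods within the
  length, so the subtractive Euclidean algorithm runs inside the list.\<close>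
lemma fine_wilf:
  "has_period x p \<Longrightarrow> has_period x q \<Longrightarrow> p + q \<le> length x \<Longrightarrow> has_period x (gcd p q)"
proof (induction "p + q" arbitrary: p q rule: less_induct)
  case less
  consider "p = 0 \<or> q = 0 \<or> p = q" | "0 < p" "p < q" | "0 < q" "q < p" by linarith
  then show ?case
  proof cases
    case 1
    then show ?thesis using less.prems by auto
  next
    case 2
    then have "has_period x (q - p)"
      using fine_wilf_step[OF less.prems(1,2)] less.prems(3) by simp
    then have "has_period x (gcd p (q - p))"
      by (intro less.hyps) (use 2 less.prems in auto)
    then show ?thesis using 2 by (metis gcd.commute gcd_diff1_nat less_imp_le)
  next
    case 3
    then have "has_period x (p - q)"
      using fine_wilf_step[OF less.prems(2,1)] less.prems(3) by simp
    then have "has_period x (gcd (p - q) q)"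
      by (intro less.hyps) (use 3 less.prems in auto)
    then show ?thesis using 3 by (metis gcd_diff1_nat less_imp_le)
  qed
qed

lemma has_period_rev_imp:
  assumes "has_period x p"
  shows "has_period (rev x) p"
  unfolding has_period_def
proof (intro allI impI)
  fix k assume k: "k + p < length (rev x)"
  then have "x ! (length x - Suc (k + p)) = x ! (length x - Suc (k + p) + p)"
    by (intro has_periodD[OF assms]) simp
  moreover have "length x - Suc (k + p) + p = length x - Suc k" using k by simp
  ultimately show "rev x ! k = rev x ! (k + p)" using k by (simp add: rev_nth)
qed

lemma has_period_rev [simp]: "has_period (rev x) p \<longleftrightarrow> has_period x p"
  using has_period_rev_imp[of x p] has_period_rev_imp[of "rev x" p] by auto

lemma has_period_Cons_extend:
  assumes yq: "has_period (y # ys) q" and ys: "has_period ys g"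
    and "g dvd q" "0 < g" "0 < q" "q \<le> length ys"
  shows "has_period (y # ys) g"
  unfolding has_period_def
proof (intro allI impI)
  fix k assume k: "k + g < length (y # ys)"
  show "(y # ys) ! k = (y # ys) ! (k + g)"
  proof (cases k)
    case 0
    obtain c where c: "q = g * c" using \<open>g dvd q\<close> by blast
    then have "q - 1 = (g - 1) + g * (c - 1)"
      using \<open>0 < g\<close> \<open>0 < q\<close> by (cases c) (auto simp: algebra_simps)
    then have "ys ! (q - 1) = ys ! (g - 1)"
      using \<open>q \<le> length ys\<close> \<open>0 < q\<close> k 0 by (intro has_period_nth_cong[OF ys]) auto
    moreover have "(y # ys) ! 0 = (y # ys) ! q"
      using has_periodD[OF yq, of 0] \<open>q \<le> length ys\<close> by simp
    ultimately show ?thesis using 0 \<open>0 < g\<close> \<open>0 < q\<close> by simp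
  next
    case (Suc k')
    then show ?thesis using has_periodD[OF ys, of k'] k by simp
  qed
qed

lemma per_Cons_eq_divisor:
  assumes "has_period ys g" "g dvd per (y # ys)" "per (y # ys) \<le> length ys"
  shows "per (y # ys) = g"
proof -
  have "0 < g" using assms(2) per_pos[of "y # ys"] by (cases g) auto
  then have "has_period (y # ys) g"
    by (rule has_period_Cons_extend[OF has_period_per assms(1,2) _ per_pos assms(3)])
  then have "per (y # ys) \<le> g" by (rule per_le[OF \<open>0 < g\<close>])
  moreover have "g \<le> per (y # ys)" by (rule dvd_imp_le[OF assms(2) per_pos])
  ultimately show ?thesis by simp
qed

lemma per_rev [simp]: "per (rev x) = per x"
  by (simp add: per_eq_Least_has_period)

text \<open>Two overlapping windows share their short periods: both periods are periods of the
  overlap, hence so is their gcd, which then extends to either window by one position.\<close>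
lemma per_butlast_eq_per_tl:
  assumes "2 * per (butlast v) + 2 \<le> length v" "2 * per (tl v) + 2 \<le> length v"
  shows "per (butlast v) = per (tl v)"
proof -
  have "length (butlast v) \<noteq> 0" using assms(1) by simp
  then obtain y ys where y: "butlast v = y # ys" by (cases "butlast v") auto
  have "length (tl v) \<noteq> 0" using assms(1) by simp
  then obtain zs z where z: "tl v = zs @ [z]" by (cases "tl v" rule: rev_cases) auto
  have "ys = zs" using y z butlast_tl[of v] by simp
  have len: "length ys + 2 = length v" using arg_cong[OF y, of length] assms(1) by simp
  define g where "g = gcd (per (butlast v)) (per (tl v))"
  have "has_period ys (per (butlast v))"
    using has_period_tl[OF has_period_per[of "butlast v"]] y by simp
  moreover have "has_period ys (per (tl v))"
    using has_period_take[OF has_period_per[of "tl v"], of "length zs"] z \<open>ys = zs\<close> by simp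
  moreover have "per (butlast v) + per (tl v) \<le> length ys" using assms len by linarith
  ultimately have ys_g: "has_period ys g"
    unfolding g_def by (rule fine_wilf)
  have rev_tl: "per (z # rev ys) = per (tl v)"
    using z \<open>ys = zs\<close> per_rev[of "tl v"] by simp
  have "per (y # ys) = g"
    using assms(1) len y by (intro per_Cons_eq_divisor[OF ys_g]) (simp_all add: g_def)
  moreover have "per (z # rev ys) = g"
  proof (rule per_Cons_eq_divisor)
    show "has_period (rev ys) g" using ys_g by simp
    show "g dvd per (z # rev ys)" using rev_tl by (simp add: g_def)
    show "per (z # rev ys) \<le> length (rev ys)" using rev_tl assms(2) len by simp
  qed
  ultimately show ?thesis using y rev_tl by simp
qed

lemma has_period_of_windows:
  assumes "length x = m + w" "p < w" "\<And>s. s \<le> m \<Longrightarrow> has_period (take w (drop s x)) p"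
  shows "has_period x p"
  unfolding has_period_def
proof (intro allI impI)
  fix k assume k: "k + p < length x"
  define s where "s = min k m"
  have "has_period (take w (drop s x)) p" using assms(3) s_def by simp
  moreover have "k - s + p < w" "s \<le> k"
    using assms(1,2) k unfolding s_def by (cases "k \<le> m"; simp)+
  moreover have "k - s + p < length (take w (drop s x))"
    using assms(1) \<open>k - s + p < w\<close> \<open>s \<le> k\<close> k by auto
  ultimately have "take w (drop s x) ! (k - s) = take w (drop s x) ! (k - s + p)"
    unfolding has_period_def by blast
  moreover have "take w (drop s x) ! (k - s) = x ! k" "take w (drop s x) ! (k - s + p) = x ! (k + p)"
    using \<open>k - s + p < w\<close> \<open>s \<le> k\<close> k by auto
  ultimately show "x ! k = x ! (k + p)" by simp
qed

lemma per_eq_per_take_of_windows: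
  assumes "length x = m + w" "\<And>s. s \<le> m \<Longrightarrow> 2 * per (take w (drop s x)) < w"
  shows "per x = per (take w x)"
proof -
  have windows: "per (take w (drop s x)) = per (take w x)" if "s \<le> m" for s
    using that
  proof (induction s)
    case (Suc s)
    define v where "v = take (Suc w) (drop s x)"
    have v: "butlast v = take w (drop s x)" "tl v = take w (drop (Suc s) x)" "length v = Suc w"
      using Suc.prems assms(1) by (auto simp: v_def butlast_conv_take tl_take drop_Suc tl_drop)
    have "per (butlast v) = per (tl v)"
      using assms(2)[of s] assms(2)[of "Suc s"] Suc.prems
      by (intro per_butlast_eq_per_tl) (simp_all only: v, simp_all)
    then have "per (take w (drop s x)) = per (take w (drop (Suc s) x))" by (simp only: v)
    then show ?case using Suc by simp
  qed simp
  have "has_period x (per (take w x))"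
  proof (rule has_period_of_windows[OF assms(1)])
    show "per (take w x) < w" using assms(2)[of 0] by simp
    show "has_period (take w (drop s x)) (per (take w x))" if "s \<le> m" for s
      using has_period_per[of "take w (drop s x)"] windows[OF that] by simp
  qed
  then have "per x \<le> per (take w x)" using per_le per_pos by blast
  moreover have "per (take w x) \<le> per x"
    using per_le[OF per_pos has_period_take[OF has_period_per]] by blast
  ultimately show ?thesis by simp
qed

section \<open>Rotations and the tail decomposition\<close>

definition rotations :: "'a list \<Rightarrow> nat \<Rightarrow> 'a list set" where
  "rotations x p = (\<lambda>t. take p (drop t x)) ` {..<p}"

lemma rotations_tl:
  assumes "has_period x p" "2 * p \<le> length x"
  shows "rotations (tl x) p = rotations x p"
proof (cases "p = 0")
  case False
  have wrap: "take p (drop p x) = take p (drop 0 x)"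
    using take_drop_mod_period[OF assms(1), of p p] assms(2) by simp
  have "rotations (tl x) p = (\<lambda>t. take p (drop t x)) ` Suc ` {..<p}"
    by (simp add: rotations_def image_image flip: drop_Suc)
  also have "Suc ` {..<p} = insert p {1..<p}"
    using False by (auto simp: image_Suc_lessThan)
  also have "(\<lambda>t. take p (drop t x)) ` insert p {1..<p} = (\<lambda>t. take p (drop t x)) ` insert 0 {1..<p}"
    using wrap by simp
  also have "insert 0 {1..<p} = {..<p}"
    using False by auto
  finally show ?thesis by (simp add: rotations_def)
qed (simp add: rotations_def)

lemma Min_rotations_mem: "0 < p \<Longrightarrow> Min (rotations x p) \<in> rotations x p"
  by (intro Min_in) (auto simp: rotations_def)

lemma take_mult_period:
  "has_period x p \<Longrightarrow> k * p \<le> length x \<Longrightarrow> take (k * p) x = concat (replicate k (take p x))"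
proof (induction k)
  case (Suc k)
  have "take (k * p + p) x = take (k * p) x @ take p (drop (k * p) x)"
    by (rule take_add)
  also have "take p (drop (k * p) x) = take p x"
    using take_drop_mod_period[OF Suc.prems(1), of "k * p" p] Suc.prems(2) by simp
  also have "take (k * p) x = concat (replicate k (take p x))"
    using Suc by simp
  also have "concat (replicate k (take p x)) @ take p x = concat (replicate (Suc k) (take p x))"
    by (simp flip: replicate_append_same)
  finally show ?case by (simp add: add.commute)
qed simp

lemma periodic_decomposition:
  assumes "has_period x p" "a + k * p \<le> length x"
  shows "x = take a x @ concat (replicate k (take p (drop a x))) @ drop (a + k * p) x"
proof -
  have "take (k * p) (drop a x) = concat (replicate k (take p (drop a x)))"
    using assms by (intro take_mult_period) (simp_all add: has_period_drop)
  moreover have "drop (k * p) (drop a x) = drop (a + k * p) x"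
    by (simp add: add.commute)
  ultimately show ?thesis
    by (simp only: append_take_drop_id flip: \<open>drop (k * p) (drop a x) = drop (a + k * p) x\<close>
        \<open>take (k * p) (drop a x) = concat (replicate k (take p (drop a x)))\<close>)
qed

lemma nat_mod_diff_right_eq: "t \<le> n \<Longrightarrow> (n - t mod p) mod p = (n - t) mod (p::nat)"
proof -
  assume "t \<le> n"
  moreover have "t mod p + p * (t div p) = t" by simp
  ultimately have "n - t mod p = (n - t) + p * (t div p)" by linarith
  then show ?thesis by simp
qed

definition tail_decomposition :: "'a list \<Rightarrow> 'a list \<Rightarrow> nat \<Rightarrow> bool" where
  "tail_decomposition x h l \<longleftrightarrow> (\<exists>h' k h''. x = h' @ concat (replicate k h) @ h'' \<and>
      strict_suffix h' h \<and> strict_prefix h'' h \<and> l = length h'')"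

lemma Ltail_eq_The_tail_decomposition:
  "Ltail T \<tau> j = (THE l. tail_decomposition (sub T j (run_end T \<tau> j)) (Lroot T \<tau> j) l)"
  by (simp add: Ltail_def tail_decomposition_def)

lemma tail_decomposition_exists:
  assumes "has_period x p" "0 < p" "t + p \<le> length x"
  shows "tail_decomposition x (take p (drop t x)) ((length x - t) mod p)"
proof -
  define a where "a = t mod p"
  define k where "k = (length x - a) div p"
  define b where "b = (length x - a) mod p"
  define h where "h = take p (drop a x)"
  have "a < p" "a \<le> t" "b < p" using assms(2) by (simp_all add: a_def b_def)
  have len: "a + k * p + b = length x"
    using \<open>a \<le> t\<close> assms(3) by (simp add: k_def b_def)
  have "take p (drop t x) = h"
    using take_drop_mod_period[OF assms(1,3)] by (simp add: a_def h_def)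
  moreover have "x = take a x @ concat (replicate k h) @ drop (a + k * p) x"
    unfolding h_def by (rule periodic_decomposition[OF assms(1)]) (use len in simp)
  moreover have "strict_suffix (take a x) h"
  proof -
    have "drop (p - a) h = take a (drop p x)"
      using \<open>a < p\<close> by (simp add: h_def drop_take)
    also have "\<dots> = take a x"
      using take_drop_mod_period[OF assms(1), of p a] \<open>a \<le> t\<close> assms(3) by simp
    finally have "suffix (take a x) h" by (metis suffix_drop)
    moreover have "length h = p" using \<open>a \<le> t\<close> assms(3) by (simp add: h_def)
    ultimately show ?thesis using \<open>a < p\<close> by (auto simp: strict_suffix_def)
  qed
  moreover have "strict_prefix (drop (a + k * p) x) h"
  proof -
    have "drop (a + k * p) x = take b (drop (a + k * p) x)"
      using len by simp
    also have "\<dots> = take b (drop a x)"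
      using take_drop_mod_period[OF assms(1), of "a + k * p" b] len \<open>a < p\<close> by simp
    also have "\<dots> = take b h"
      using \<open>b < p\<close> by (simp add: h_def)
    finally have "prefix (drop (a + k * p) x) h" by (metis take_is_prefix)
    moreover have "length (drop (a + k * p) x) < length h"
      using \<open>a \<le> t\<close> \<open>b < p\<close> assms(3) len by (simp add: h_def)
    ultimately show ?thesis by (auto simp: strict_prefix_def)
  qed
  moreover have "(length x - t) mod p = length (drop (a + k * p) x)"
    using len assms(3) by (simp add: b_def a_def nat_mod_diff_right_eq)
  ultimately show ?thesis
    unfolding tail_decomposition_def by (intro exI conjI) (simp_all only:)
qed

lemma has_period_of_equal_blocks:
  assumes "has_period x p" "a < a'" "a' < p" "2 * p \<le> length x"
    and "take p (drop a x) = take p (drop a' x)"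
  shows "has_period x (a' - a)"
  unfolding has_period_def
proof (intro allI impI)
  fix y assume y: "y + (a' - a) < length x"
  define i where "i = (y + p - a) mod p"
  have "i < p" using assms(2,3) by (simp add: i_def)
  have "(a + i) mod p = y mod p"
    using assms(2,3) by (simp add: i_def mod_add_right_eq)
  have "a' + i = (a + i) + (a' - a)" using assms(2) by simp
  then have "(a' + i) mod p = ((a + i) mod p + (a' - a)) mod p"
    by (metis mod_add_left_eq)
  also have "\<dots> = (y + (a' - a)) mod p"
    using \<open>(a + i) mod p = y mod p\<close> by (simp add: mod_add_left_eq)
  finally have "(a' + i) mod p = (y + (a' - a)) mod p" .
  have "x ! y = x ! (a + i)"
    using \<open>(a + i) mod p = y mod p\<close> y \<open>i < p\<close> assms(2-4)
    by (intro has_period_nth_cong[OF assms(1)]) auto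
  also have "\<dots> = x ! (a' + i)"
    using arg_cong[OF assms(5), of "\<lambda>z. z ! i"] \<open>i < p\<close> assms(2-4) by simp
  also have "\<dots> = x ! (y + (a' - a))"
    using \<open>(a' + i) mod p = (y + (a' - a)) mod p\<close> y \<open>i < p\<close> assms(2-4)
    by (intro has_period_nth_cong[OF assms(1)]) auto
  finally show "x ! y = x ! (y + (a' - a))" .
qed

lemma inj_on_rotations:
  assumes "2 * per x \<le> length x"
  shows "inj_on (\<lambda>t. take (per x) (drop t x)) {..<per x}"
proof (rule linorder_inj_onI')
  fix a a' assume "a \<in> {..<per x}" "a' \<in> {..<per x}" "a < a'"
  show "take (per x) (drop a x) \<noteq> take (per x) (drop a' x)"
  proof
    assume "take (per x) (drop a x) = take (per x) (drop a' x)"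
    then have "has_period x (a' - a)"
      using \<open>a < a'\<close> \<open>a' \<in> {..<per x}\<close> assms
      by (intro has_period_of_equal_blocks[OF has_period_per]) auto
    then show False
      using per_le[of "a' - a" x] \<open>a < a'\<close> \<open>a' \<in> {..<per x}\<close> by simp
  qed
qed

lemma tail_decomposition_unique:
  assumes "2 * per x \<le> length x" "t + per x \<le> length x"
    and "tail_decomposition x (take (per x) (drop t x)) l"
  shows "l = (length x - t) mod per x"
proof -
  define p where "p = per x"
  define h where "h = take p (drop t x)"
  obtain h' k h'' where dec: "x = h' @ concat (replicate k h) @ h''"
    and "strict_suffix h' h" "strict_prefix h'' h" "l = length h''"
    using assms(3) unfolding tail_decomposition_def p_def h_def by blast
  have "length h = p" using assms(2) by (simp add: h_def p_def)
  then have "length h' < p" "l < p"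
    using suffix_length_less[OF \<open>strict_suffix h' h\<close>] prefix_length_less[OF \<open>strict_prefix h'' h\<close>]
      \<open>l = length h''\<close> by simp_all
  have len: "length x = length h' + k * p + l"
    using arg_cong[OF dec, of length] \<open>length h = p\<close> \<open>l = length h''\<close>
    by (simp add: length_concat sum_list_replicate)
  then obtain k' where "k = Suc k'"
    using assms(1) \<open>length h' < p\<close> \<open>l < p\<close> by (cases k) (auto simp: p_def)
  then have "take p (drop (length h') x) = h"
    using dec \<open>length h = p\<close> by simp
  moreover have "h = take p (drop (t mod p) x)"
    using take_drop_mod_period[OF has_period_per assms(2)] by (simp add: h_def p_def)
  moreover have "t mod p < p" using per_pos by (simp add: p_def)
  ultimately have "length h' = t mod p"
    using \<open>length h' < p\<close> unfolding p_def
    by (intro inj_onD[OF inj_on_rotations[OF assms(1)]]) simp_all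
  then have "l = (length x - t mod p) mod p"
    using len \<open>l < p\<close> by simp
  then show ?thesis
    using assms(2) by (simp add: nat_mod_diff_right_eq p_def)
qed

lemma The_tail_decomposition:
  assumes "2 * per x \<le> length x" "t + per x \<le> length x"
  shows "(THE l. tail_decomposition x (take (per x) (drop t x)) l) = (length x - t) mod per x"
proof (rule the_equality)
  show "tail_decomposition x (take (per x) (drop t x)) ((length x - t) mod per x)"
    by (rule tail_decomposition_exists[OF has_period_per per_pos assms(2)])
  show "l = (length x - t) mod per x" if "tail_decomposition x (take (per x) (drop t x)) l" for l
    by (rule tail_decomposition_unique[OF assms that])
qed

lemma The_tail_decomposition_tl:
  assumes "per (tl x) = per x" "3 * per x \<le> length x" "h \<in> rotations x (per x)"
  shows "(THE l. tail_decomposition (tl x) h l) = (THE l. tail_decomposition x h l)"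
proof -
  define p where "p = per x"
  obtain t where "t < p" and h: "h = take p (drop t x)"
    using assms(3) by (auto simp: rotations_def p_def)
  have "0 < p" using per_pos by (simp add: p_def)
  have "take p (drop (t + p) x) = take p (drop t x)"
    using take_drop_mod_period[OF has_period_per[of x], of "t + p" p] assms(2) \<open>t < p\<close>
    by (simp add: p_def)
  moreover have "drop (t + p - 1) (tl x) = drop (t + p) x"
    using \<open>0 < p\<close> by (simp flip: drop_Suc)
  ultimately have "h = take (per (tl x)) (drop (t + p - 1) (tl x))"
    using h assms(1) by (simp add: p_def)
  then have "(THE l. tail_decomposition (tl x) h l) = (length x - 1 - (t + p - 1)) mod p"
    using The_tail_decomposition[of "tl x" "t + p - 1"] assms(1,2) \<open>t < p\<close> \<open>0 < p\<close>
    by (simp add: p_def)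
  also have "\<dots> = (length x - t) mod p"
  proof -
    have "length x - 1 - (t + p - 1) + p = length x - t"
      using assms(2) \<open>t < p\<close> \<open>0 < p\<close> by (simp add: p_def)
    then show ?thesis by (metis mod_add_self2)
  qed
  also have "\<dots> = (THE l. tail_decomposition x h l)"
    using The_tail_decomposition[of x t] assms(2) \<open>t < p\<close> h by (simp add: p_def)
  finally show ?thesis .
qed

section \<open>Runs of periodic windows\<close>

abbreviation window :: "nat list \<Rightarrow> nat \<Rightarrow> nat \<Rightarrow> nat list" where
  "window T \<tau> i \<equiv> sub T i (i + 3 * \<tau> - 1)"

lemma length_sub: "1 \<le> i \<Longrightarrow> e \<le> length T + 1 \<Longrightarrow> length (sub T i e) = e - i"
  by (simp add: sub_def)

lemma take_drop_sub:
  "1 \<le> i \<Longrightarrow> i + s + m \<le> e \<Longrightarrow> take m (drop s (sub T i e)) = sub T (i + s) (i + s + m)"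
  by (cases i) (simp_all add: sub_def drop_take take_take min_absorb1 add.commute)

lemma tl_sub: "1 \<le> i \<Longrightarrow> tl (sub T i e) = sub T (Suc i) e"
  by (cases i) (simp_all add: sub_def tl_take tl_drop drop_Suc)

lemma Rset_per: "i \<in> Rset T \<tau> \<Longrightarrow> 3 * per (window T \<tau> i) \<le> \<tau>"
  unfolding Rset_def by auto

lemma run_end_Suc:
  assumes "i \<in> Rset T \<tau>"
  shows "run_end T \<tau> i = run_end T \<tau> (Suc i)"
proof -
  have "i \<le> k \<and> k \<notin> Rset T \<tau> \<longleftrightarrow> Suc i \<le> k \<and> k \<notin> Rset T \<tau>" for k
    using assms by (cases "k = i") auto
  then show ?thesis unfolding run_end_def by simp
qed

lemma run_end_Rset:
  assumes "i \<in> Rset T \<tau>"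
  obtains J where "i < J" "run_end T \<tau> i = J + 3 * \<tau> - 2"
    "\<And>k. i \<le> k \<Longrightarrow> k < J \<Longrightarrow> k \<in> Rset T \<tau>"
proof -
  define J where "J = (LEAST k. i \<le> k \<and> k \<notin> Rset T \<tau>)"
  have "i \<le> length T + 3 \<and> length T + 3 \<notin> Rset T \<tau>"
    using assms by (auto simp: Rset_def)
  then have "i \<le> J \<and> J \<notin> Rset T \<tau>"
    unfolding J_def by (rule LeastI)
  then have "i < J" using assms by (cases "J = i") auto
  moreover have "k \<in> Rset T \<tau>" if "i \<le> k" "k < J" for k
    using not_less_Least[of k "\<lambda>k. i \<le> k \<and> k \<notin> Rset T \<tau>"] that by (auto simp: J_def)
  ultimately show ?thesis using that by (simp add: run_end_def J_def)
qed

lemma run_end_bounds: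
  assumes "i \<in> Rset T \<tau>"
  shows "i + 3 * \<tau> - 1 \<le> run_end T \<tau> i" "run_end T \<tau> i \<le> length T + 1"
proof -
  obtain J where "i < J" "run_end T \<tau> i = J + 3 * \<tau> - 2"
    and "\<And>k. i \<le> k \<Longrightarrow> k < J \<Longrightarrow> k \<in> Rset T \<tau>"
    using run_end_Rset[OF assms] by blast
  moreover have "J - 1 \<in> Rset T \<tau>" using calculation by simp
  ultimately show "i + 3 * \<tau> - 1 \<le> run_end T \<tau> i" "run_end T \<tau> i \<le> length T + 1"
    by (auto simp: Rset_def)
qed

lemma per_window_Suc:
  assumes "1 \<le> \<tau>" "i \<in> Rset T \<tau>" "Suc i \<in> Rset T \<tau>"
  shows "per (window T \<tau> (Suc i)) = per (window T \<tau> i)"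
proof -
  define v where "v = sub T i (i + 3 * \<tau>)"
  have "1 \<le> i" "Suc i + 3 * \<tau> \<le> length T + 2" using assms(2,3) by (auto simp: Rset_def)
  then have "length v = 3 * \<tau>" by (simp add: v_def length_sub)
  have "butlast v = window T \<tau> i"
    using \<open>1 \<le> i\<close> take_drop_sub[of i 0 "3 * \<tau> - 1" "i + 3 * \<tau>" T] assms(1) \<open>length v = 3 * \<tau>\<close>
    by (simp add: butlast_conv_take v_def)
  moreover have "tl v = window T \<tau> (Suc i)"
    using \<open>1 \<le> i\<close> assms(1) by (simp add: v_def tl_sub)
  ultimately show ?thesis
    using per_butlast_eq_per_tl[of v] Rset_per[OF assms(2)] Rset_per[OF assms(3)] assms(1)
      \<open>length v = 3 * \<tau>\<close> by simp
qed

lemma per_run_fragment: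
  assumes "1 \<le> \<tau>" "i \<in> Rset T \<tau>"
  shows "per (sub T i (run_end T \<tau> i)) = per (window T \<tau> i)"
proof -
  obtain J where "i < J" and e: "run_end T \<tau> i = J + 3 * \<tau> - 2"
    and R: "\<And>k. i \<le> k \<Longrightarrow> k < J \<Longrightarrow> k \<in> Rset T \<tau>"
    using run_end_Rset[OF assms(2)] by blast
  define U where "U = sub T i (run_end T \<tau> i)"
  define w where "w = 3 * \<tau> - 1"
  have "1 \<le> i" using assms(2) by (simp add: Rset_def)
  have "length U = (J - 1 - i) + w"
    using length_sub[OF \<open>1 \<le> i\<close> run_end_bounds(2)[OF assms(2)]] e \<open>i < J\<close> assms(1)
    by (simp add: U_def w_def)
  have windows: "take w (drop s U) = window T \<tau> (i + s)" if "s \<le> J - 1 - i" for s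
    using take_drop_sub[OF \<open>1 \<le> i\<close>, of s w "run_end T \<tau> i" T] that e \<open>i < J\<close> assms(1)
    by (simp add: U_def w_def)
  have "per U = per (take w U)"
  proof (rule per_eq_per_take_of_windows[OF \<open>length U = (J - 1 - i) + w\<close>])
    fix s assume "s \<le> J - 1 - i"
    then have "3 * per (take w (drop s U)) \<le> \<tau>"
      using windows Rset_per[OF R[of "i + s"]] \<open>i < J\<close> by (simp add: w_def)
    then show "2 * per (take w (drop s U)) < w"
      using assms(1) by (simp add: w_def)
  qed
  then show ?thesis using windows[of 0] by (simp add: U_def w_def)
qed

lemma Lroot_eq_Min_rotations:
  assumes "1 \<le> i" "i + 2 * per (window T \<tau> i) \<le> e"
  shows "Lroot T \<tau> i = Min (rotations (sub T i e) (per (window T \<tau> i)))"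
proof -
  define p where "p = per (window T \<tau> i)"
  have "{sub T (i + t) (i + t + p) | t. t < p} = rotations (sub T i e) p"
    using take_drop_sub[OF assms(1), of _ p e T] assms(2) by (auto simp: p_def rotations_def)
  then show ?thesis unfolding Lroot_def Let_def p_def[symmetric] by simp
qed

lemma Lroot_Suc:
  assumes "1 \<le> \<tau>" "i \<in> Rset T \<tau>" "Suc i \<in> Rset T \<tau>"
  shows "Lroot T \<tau> (Suc i) = Lroot T \<tau> i"
proof -
  define e where "e = run_end T \<tau> i"
  define p where "p = per (window T \<tau> i)"
  have "1 \<le> i" using assms(2) by (simp add: Rset_def)
  have "3 * p \<le> \<tau>" using Rset_per[OF assms(2)] by (simp add: p_def)
  have p_Suc: "per (window T \<tau> (Suc i)) = p" using per_window_Suc[OF assms] by (simp add: p_def)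
  have "Suc i + 3 * \<tau> - 1 \<le> e" "e \<le> length T + 1"
    using run_end_bounds[OF assms(3)] run_end_Suc[OF assms(2)] by (simp_all add: e_def)
  then have "Suc i + 2 * p \<le> e" "2 * p \<le> length (sub T i e)"
    using \<open>3 * p \<le> \<tau>\<close> assms(1) length_sub[OF \<open>1 \<le> i\<close>] by simp_all
  have "Lroot T \<tau> (Suc i) = Min (rotations (sub T (Suc i) e) (per (window T \<tau> (Suc i))))"
    by (rule Lroot_eq_Min_rotations) (use \<open>1 \<le> i\<close> \<open>Suc i + 2 * p \<le> e\<close> p_Suc in simp_all)
  also have "per (window T \<tau> (Suc i)) = p" by (rule p_Suc)
  also have "sub T (Suc i) e = tl (sub T i e)"
    using tl_sub[OF \<open>1 \<le> i\<close>] by simp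
  also have "rotations (tl (sub T i e)) p = rotations (sub T i e) p"
    using has_period_per[of "sub T i e"] per_run_fragment[OF assms(1,2)] \<open>2 * p \<le> length (sub T i e)\<close>
    by (intro rotations_tl) (simp_all add: e_def p_def)
  also have "Min (rotations (sub T i e) p) = Lroot T \<tau> i"
    using Lroot_eq_Min_rotations[OF \<open>1 \<le> i\<close>, of T \<tau> e] \<open>Suc i + 2 * p \<le> e\<close>
    by (simp add: p_def)
  finally show ?thesis .
qed

lemma Ltail_Suc:
  assumes "1 \<le> \<tau>" "i \<in> Rset T \<tau>" "Suc i \<in> Rset T \<tau>"
  shows "Ltail T \<tau> (Suc i) = Ltail T \<tau> i"
proof -
  define e where "e = run_end T \<tau> i"
  define U where "U = sub T i e"
  have "1 \<le> i" using assms(2) by (simp add: Rset_def)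
  have e_Suc: "run_end T \<tau> (Suc i) = e" using run_end_Suc[OF assms(2)] by (simp add: e_def)
  have tl_U: "tl U = sub T (Suc i) e" using tl_sub[OF \<open>1 \<le> i\<close>] by (simp add: U_def)
  have per_U: "per U = per (window T \<tau> i)"
    using per_run_fragment[OF assms(1,2)] by (simp add: U_def e_def)
  have "i + 3 * \<tau> - 1 \<le> e" "e \<le> length T + 1"
    using run_end_bounds[OF assms(2)] by (simp_all add: e_def)
  then have "3 * per U \<le> length U" "i + 2 * per (window T \<tau> i) \<le> e"
    using per_U Rset_per[OF assms(2)] length_sub[OF \<open>1 \<le> i\<close>] assms(1) by (simp_all add: U_def)
  have "per (tl U) = per U"
    using per_run_fragment[OF assms(1,3)] per_window_Suc[OF assms] e_Suc tl_U per_U by simp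
  moreover have "Lroot T \<tau> i \<in> rotations U (per U)"
    using Lroot_eq_Min_rotations[OF \<open>1 \<le> i\<close> \<open>i + 2 * per (window T \<tau> i) \<le> e\<close>]
      Min_rotations_mem[OF per_pos] per_U by (simp add: U_def)
  ultimately have "(THE l. tail_decomposition (sub T (Suc i) e) (Lroot T \<tau> i) l) =
      (THE l. tail_decomposition U (Lroot T \<tau> i) l)"
    using The_tail_decomposition_tl \<open>3 * per U \<le> length U\<close> unfolding tl_U[symmetric] by blast
  then show ?thesis
    using Lroot_Suc[OF assms] unfolding Ltail_eq_The_tail_decomposition e_Suc by (simp add: U_def e_def)
qed

theorem lemma5p12:
  fixes T :: "nat list" and \<sigma> n \<tau> :: nat and \<mu> :: real
  assumes "n = length T"
    and "\<forall>c \<in> set T. c < \<sigma>"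
    and "2 \<le> \<sigma>" and "real \<sigma> < real n powr (1/7)"
    and "0 < \<mu>" and "\<mu> < 1/6"
    and "\<tau> = nat \<lfloor>\<mu> * log (real \<sigma>) (real n)\<rfloor>" and "1 \<le> \<tau>"
    and "j \<in> Rset T \<tau> - Rprime T \<tau>"
  shows "Lroot T \<tau> (j - 1) = Lroot T \<tau> j \<and>
         run_end T \<tau> (j - 1) = run_end T \<tau> j \<and>
         Ltail T \<tau> (j - 1) = Ltail T \<tau> j \<and>
         efull T \<tau> (j - 1) = efull T \<tau> j \<and>
         rtype T \<tau> (j - 1) = rtype T \<tau> j"
proof -
  have "j - 1 \<in> Rset T \<tau>" "j \<in> Rset T \<tau>" using assms(9) by (auto simp: Rprime_def)
  moreover obtain i where "j = Suc i" using \<open>j \<in> Rset T \<tau>\<close> by (cases j) (auto simp: Rset_def)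
  ultimately have R: "i \<in> Rset T \<tau>" "Suc i \<in> Rset T \<tau>" by simp_all
  have "Lroot T \<tau> i = Lroot T \<tau> (Suc i)" using Lroot_Suc[OF \<open>1 \<le> \<tau>\<close> R] by simp
  moreover have "run_end T \<tau> i = run_end T \<tau> (Suc i)" using run_end_Suc[OF R(1)] .
  moreover have "Ltail T \<tau> i = Ltail T \<tau> (Suc i)" using Ltail_Suc[OF \<open>1 \<le> \<tau>\<close> R] by simp
  ultimately show ?thesis
    unfolding efull_def rtype_def \<open>j = Suc i\<close> by simp
qed

end
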